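(* Let $V$ be a toroidal vertex algebra and let $(W,Y_W)$ be a $V$-module. Then for every $v\in V$ and $(m_0,\mathbf{m})\in\mathbb{Z}\times\mathbb{Z}^r$, $$Y_W(v_{m_0,\mathbf{m}}\mathbf{1};x_0,\mathbf{x})\in \mathbf{x}^{-\mathbf{m}}\,\mathcal{E}(W),$$ and $$Y_W(v;x_0,\mathbf{x})=\sum_{\mathbf{m}\in\mathbb{Z}^r}Y_W(v_{-1,\mathbf{m}}\mathbf{1};x_0,\mathbf{x}).$$ For $u\in V^0$ set $Y_W^0(u,x_0)=Y_W(u;x_0,\mathbf{x})|_{\mathbf{x}=1}\in\mathcal{E}(W)$. Then $(W,Y_W^0)$ is a module for $V^0$ viewed as a vertex algebra (with vertex operator map $Y^0$). Furthermore, if $(W,Y_W)$ is an irreducible $V$-module, then $(W,Y_W^0)$ is an irreducible module for the vertex algebra $V^0$.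
   Context: Fix a positive integer $r$. Write $\mathbf{x}=(x_1,\dots,x_r)$ and $\mathbf{x}^{\mathbf{m}}=x_1^{m_1}\cdots x_r^{m_r}$ for $\mathbf{m}\in\mathbb{Z}^r$ (similarly for other variables), and $\mathbf{z}\mathbf{y}=(z_1y_1,\dots,z_ry_r)$. For a vector space $W$ put $\mathcal{E}(W,r)=\mathrm{Hom}(W,W[[x_1^{\pm1},\dots,x_r^{\pm1}]]((x_0)))$ and $\mathcal{E}(W)=\mathrm{Hom}(W,W((x_0)))$. A toroidal vertex algebra is a vector space $V$ with a linear map $Y(\cdot;x_0,\mathbf{x}):V\to\mathcal{E}(V,r)$, $v\mapsto\sum_{(m_0,\mathbf{m})\in\mathbb{Z}\times\mathbb{Z}^r}v_{m_0,\mathbf{m}}x_0^{-m_0-1}\mathbf{x}^{-\mathbf{m}}$, and a vector $\mathbf{1}\in V$ such that $Y(\mathbf{1};x_0,\mathbf{x})v=v$ and $Y(v;x_0,\mathbf{x})\mathbf{1}\in V[[x_0,x_1^{\pm1},\dots,x_r^{\pm1}]]$ for all $v\in V$, and for all $u,v\in V$ $$z_0^{-1}\delta\!\left(\tfrac{x_0-y_0}{z_0}\right)Y(u;x_0,\mathbf{z}\mathbf{y})Y(v;y_0,\mathbf{y})-z_0^{-1}\delta\!\left(\tfrac{y_0-x_0}{-z_0}\right)Y(v;y_0,\mathbf{y})Y(u;x_0,\mathbf{z}\mathbf{y})=y_0^{-1}\delta\!\left(\tfrac{x_0-z_0}{y_0}\right)Y(Y(u;z_0,\mathbf{z})v;y_0,\mathbf{y}),$$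 where $Y(u;x_0,\mathbf{z}\mathbf{y})=\sum u_{m_0,\mathbf{m}}x_0^{-m_0-1}\mathbf{z}^{-\mathbf{m}}\mathbf{y}^{-\mathbf{m}}$. A $V$-module is a vector space $W$ with a linear map $Y_W(\cdot;x_0,\mathbf{x}):V\to\mathcal{E}(W,r)$ with $Y_W(\mathbf{1};x_0,\mathbf{x})=1_W$ satisfying the same Jacobi identity with $Y$ replaced by $Y_W$ in the three outer operator places (the inner $Y(u;z_0,\mathbf{z})v$ remaining the algebra's). For a toroidal vertex algebra $V$, $V^0=\mathrm{span}\{v_{m_0,\mathbf{m}}\mathbf{1}\mid v\in V,(m_0,\mathbf{m})\in\mathbb{Z}\times\mathbb{Z}^r\}$; it is a toroidal vertex subalgebra, $Y(v;x_0,\mathbf{x})\in\mathcal{E}(V)[x_1^{\pm1},\dots,x_r^{\pm1}]$ for $v\in V^0$, and with $Y^0(v,x_0)=Y(v;x_0,\mathbf{x})|_{\mathbf{x}=1}$ the triple $(V^0,Y^0,\mathbf{1})$ is a vertex algebra. *)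

theory Defs
  imports Complex_Main "HOL-Analysis.Finite_Cartesian_Product"
begin

text \<open>
A vector space is a type of class
ab_group_add together with a scalar multiplication s such that vector_space s holds.
Z^r is the type int ^ 'r for a finite (hence nonempty) index type 'r, so r = CARD('r) \<ge> 1.

A formal operator series  Y(u;x0,x) = sum u_{m0,m} x0^(-m0-1) x^(-m)  is represented by its
coefficient function:  Y u m0 m w  is  u_{m0,m} w.  For ordinary vertex operators
Y(u,x0) = sum u_{m0} x0^(-m0-1) we write  Y u m0 w  for  u_{m0} w.
\<close>

text \<open>Finite-support sum: the sum of the (finitely many) nonzero values of f.
 This is the coefficientwise value of a formal sum whose family is locally finite.\<close>
definition fsum :: "('i \<Rightarrow> 'a::comm_monoid_add) \<Rightarrow> 'a" where
  "fsum f = sum f {k. f k \<noteq> 0}"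

text \<open>Coefficients of the three terms of the Jacobi identity (toroidal case).
 Coefficient of  z0^(-n-1) x0^(-p-1) y0^(-q-1) z^(-a) y^(-c)  applied to w, where
 z0^(-1) delta((x0-y0)/z0) = sum_n z0^(-n-1) (x0-y0)^n  with (x0-y0)^n expanded in
 nonnegative powers of y0, etc.  Here YW is the outer operator map and Y the inner one.\<close>

definition tjac1 ::
  "(complex \<Rightarrow> 'w::ab_group_add \<Rightarrow> 'w) \<Rightarrow> ('v \<Rightarrow> int \<Rightarrow> int^'r \<Rightarrow> 'w \<Rightarrow> 'w)
   \<Rightarrow> 'v \<Rightarrow> 'v \<Rightarrow> int \<Rightarrow> int \<Rightarrow> int \<Rightarrow> int^'r \<Rightarrow> int^'r \<Rightarrow> 'w \<Rightarrow> 'w" where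
  "tjac1 sW YW u v n p q a c w =
     fsum (\<lambda>k::nat. sW ((-1) ^ k * (of_int n gchoose k))
                        (YW u (n + p - int k) a (YW v (q + int k) (c - a) w)))"

definition tjac2 ::
  "(complex \<Rightarrow> 'w::ab_group_add \<Rightarrow> 'w) \<Rightarrow> ('v \<Rightarrow> int \<Rightarrow> int^'r \<Rightarrow> 'w \<Rightarrow> 'w)
   \<Rightarrow> 'v \<Rightarrow> 'v \<Rightarrow> int \<Rightarrow> int \<Rightarrow> int \<Rightarrow> int^'r \<Rightarrow> int^'r \<Rightarrow> 'w \<Rightarrow> 'w" where
  "tjac2 sW YW u v n p q a c w =
     fsum (\<lambda>k::nat. sW ((-1) powi n * (-1) ^ k * (of_int n gchoose k))
                        (YW v (n + q - int k) (c - a) (YW u (p + int k) a w)))"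

definition tjac3 ::
  "(complex \<Rightarrow> 'w::ab_group_add \<Rightarrow> 'w) \<Rightarrow> ('v \<Rightarrow> int \<Rightarrow> int^'r \<Rightarrow> 'w \<Rightarrow> 'w)
   \<Rightarrow> ('v \<Rightarrow> int \<Rightarrow> int^'r \<Rightarrow> 'v \<Rightarrow> 'v)
   \<Rightarrow> 'v \<Rightarrow> 'v \<Rightarrow> int \<Rightarrow> int \<Rightarrow> int \<Rightarrow> int^'r \<Rightarrow> int^'r \<Rightarrow> 'w \<Rightarrow> 'w" where
  "tjac3 sW YW Y u v n p q a c w =
     fsum (\<lambda>k::nat. sW ((-1) ^ k * (of_int (int k - p - 1) gchoose k))
                        (YW (Y u (n + int k) a v) (p + q - int k) c w))"

definition toroidal_jacobi where
  "toroidal_jacobi sW YW Y \<longleftrightarrow>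
     (\<forall>u v n p q a c w. tjac1 sW YW u v n p q a c w - tjac2 sW YW u v n p q a c w
                          = tjac3 sW YW Y u v n p q a c w)"

definition toroidal_va ::
  "(complex \<Rightarrow> 'v::ab_group_add \<Rightarrow> 'v) \<Rightarrow> ('v \<Rightarrow> int \<Rightarrow> int^'r \<Rightarrow> 'v \<Rightarrow> 'v) \<Rightarrow> 'v \<Rightarrow> bool" where
  "toroidal_va sV Y one \<longleftrightarrow>
     vector_space sV \<and>
     (\<forall>m0 m w. Vector_Spaces.linear sV sV (\<lambda>u. Y u m0 m w)) \<and>
     (\<forall>u m0 m. Vector_Spaces.linear sV sV (Y u m0 m)) \<and>
     (\<forall>u w. \<exists>N. \<forall>m0\<ge>N. \<forall>m. Y u m0 m w = 0) \<and>
     (\<forall>m0 m v. Y one m0 m v = (if m0 = -1 \<and> m = 0 then v else 0)) \<and>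
     (\<forall>v m0 m. m0 \<ge> 0 \<longrightarrow> Y v m0 m one = 0) \<and>
     toroidal_jacobi sV Y Y"

definition toroidal_module ::
  "(complex \<Rightarrow> 'v::ab_group_add \<Rightarrow> 'v) \<Rightarrow> ('v \<Rightarrow> int \<Rightarrow> int^'r \<Rightarrow> 'v \<Rightarrow> 'v) \<Rightarrow> 'v
   \<Rightarrow> (complex \<Rightarrow> 'w::ab_group_add \<Rightarrow> 'w) \<Rightarrow> ('v \<Rightarrow> int \<Rightarrow> int^'r \<Rightarrow> 'w \<Rightarrow> 'w) \<Rightarrow> bool" where
  "toroidal_module sV Y one sW YW \<longleftrightarrow>
     vector_space sW \<and>
     (\<forall>m0 m w. Vector_Spaces.linear sV sW (\<lambda>u. YW u m0 m w)) \<and>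
     (\<forall>u m0 m. Vector_Spaces.linear sW sW (YW u m0 m)) \<and>
     (\<forall>u w. \<exists>N. \<forall>m0\<ge>N. \<forall>m. YW u m0 m w = 0) \<and>
     (\<forall>m0 m w. YW one m0 m w = (if m0 = -1 \<and> m = 0 then w else 0)) \<and>
     toroidal_jacobi sW YW Y"

definition toroidal_irreducible ::
  "(complex \<Rightarrow> 'w::ab_group_add \<Rightarrow> 'w) \<Rightarrow> ('v \<Rightarrow> int \<Rightarrow> int^'r \<Rightarrow> 'w \<Rightarrow> 'w) \<Rightarrow> bool" where
  "toroidal_irreducible sW YW \<longleftrightarrow>
     (\<exists>w::'w. w \<noteq> 0) \<and>
     (\<forall>U. module.subspace sW U \<and> (\<forall>u m0 m. YW u m0 m ` U \<subseteq> U) \<longrightarrow> U = {0} \<or> U = UNIV)"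

definition V0 ::
  "(complex \<Rightarrow> 'v::ab_group_add \<Rightarrow> 'v) \<Rightarrow> ('v \<Rightarrow> int \<Rightarrow> int^'r \<Rightarrow> 'v \<Rightarrow> 'v) \<Rightarrow> 'v \<Rightarrow> 'v set" where
  "V0 sV Y one = module.span sV {Y v m0 m one | v m0 m. True}"

definition at_one :: "('v \<Rightarrow> int \<Rightarrow> int^'r \<Rightarrow> 'w \<Rightarrow> 'w::ab_group_add) \<Rightarrow> 'v \<Rightarrow> int \<Rightarrow> 'w \<Rightarrow> 'w" where
  "at_one YW u m0 w = fsum (\<lambda>m. YW u m0 m w)"

text \<open>Jacobi identity for ordinary vertex operators (coefficient of z0^(-n-1) x0^(-p-1) y0^(-q-1)),
 for u, v in the carrier V0.\<close>
definition va_jacobi ::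
  "'v set \<Rightarrow> (complex \<Rightarrow> 'w::ab_group_add \<Rightarrow> 'w) \<Rightarrow> ('v \<Rightarrow> int \<Rightarrow> 'w \<Rightarrow> 'w)
   \<Rightarrow> ('v \<Rightarrow> int \<Rightarrow> 'v \<Rightarrow> 'v) \<Rightarrow> bool" where
  "va_jacobi V sW YW Y \<longleftrightarrow>
     (\<forall>u\<in>V. \<forall>v\<in>V. \<forall>n p q w.
        fsum (\<lambda>k::nat. sW ((-1) ^ k * (of_int n gchoose k))
                          (YW u (n + p - int k) (YW v (q + int k) w)))
      - fsum (\<lambda>k::nat. sW ((-1) powi n * (-1) ^ k * (of_int n gchoose k))
                          (YW v (n + q - int k) (YW u (p + int k) w)))
      = fsum (\<lambda>k::nat. sW ((-1) ^ k * (of_int (int k - p - 1) gchoose k))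
                          (YW (Y u (n + int k) v) (p + q - int k) w)))"

text \<open>Module (W, YW) for a vertex algebra (V, Y, 1) whose underlying space is the subspace V
 (of the type 'v with scalar multiplication sV).\<close>
definition va_module ::
  "(complex \<Rightarrow> 'v::ab_group_add \<Rightarrow> 'v) \<Rightarrow> 'v set \<Rightarrow> ('v \<Rightarrow> int \<Rightarrow> 'v \<Rightarrow> 'v) \<Rightarrow> 'v
   \<Rightarrow> (complex \<Rightarrow> 'w::ab_group_add \<Rightarrow> 'w) \<Rightarrow> ('v \<Rightarrow> int \<Rightarrow> 'w \<Rightarrow> 'w) \<Rightarrow> bool" where
  "va_module sV V Y one sW YW \<longleftrightarrow>
     vector_space sW \<and>
     (\<forall>m0 w. \<forall>u\<in>V. \<forall>v\<in>V. \<forall>a b. YW (sV a u + sV b v) m0 w = sW a (YW u m0 w) + sW b (YW v m0 w)) \<and>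
     (\<forall>u\<in>V. \<forall>m0. Vector_Spaces.linear sW sW (YW u m0)) \<and>
     (\<forall>u\<in>V. \<forall>w. \<exists>N. \<forall>m0\<ge>N. YW u m0 w = 0) \<and>
     (\<forall>m0 w. YW one m0 w = (if m0 = -1 then w else 0)) \<and>
     va_jacobi V sW YW Y"

definition va_irreducible ::
  "'v set \<Rightarrow> (complex \<Rightarrow> 'w::ab_group_add \<Rightarrow> 'w) \<Rightarrow> ('v \<Rightarrow> int \<Rightarrow> 'w \<Rightarrow> 'w) \<Rightarrow> bool" where
  "va_irreducible V sW YW \<longleftrightarrow>
     (\<exists>w::'w. w \<noteq> 0) \<and>
     (\<forall>U. module.subspace sW U \<and> (\<forall>u\<in>V. \<forall>m0. YW u m0 ` U \<subseteq> U) \<longrightarrow> U = {0} \<or> U = UNIV)"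

end

theory Submission
  imports Defs
begin

text \<open>
Everything rests on one support estimate: if Y_W(v) only involves torus monomials x^-b with
b in S, then Y_W(u_{N,a} v) only involves x^-c with c - a in S.  It is proved by downward
induction on N, starting from the truncation bound of u_{N,a} v, using the Jacobi identity
with q = 0.  For v = 1 it shows that Y_W(v_{m0,m} 1) is concentrated in x^-m, and together with
the creation property that Y_W(v) = sum_m Y_W(v_{-1,m} 1).  Hence every element of V^0 has
finitely many torus modes, both on W and on V, so specializing x = 1 is a finite sum and summing
the toroidal Jacobi identity over these modes gives the Jacobi identity for Y_W^0.
Irreducibility passes to V^0 because every operator v_{m0,m} on W is a coefficient of
Y_W^0(v_{-1,m} 1).
\<close>

definition torus_support :: "('v \<Rightarrow> int \<Rightarrow> 'm \<Rightarrow> 'w \<Rightarrow> 'w::zero) \<Rightarrow> 'v \<Rightarrow> 'm set" where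
  "torus_support YW u = {m. \<exists>m0 w. YW u m0 m w \<noteq> 0}"

lemma torus_support_eq_0: "m \<notin> torus_support YW u \<Longrightarrow> YW u m0 m w = 0"
  by (auto simp: torus_support_def)

lemma fsum_eq_sum:
  assumes "finite A" "\<And>k. k \<notin> A \<Longrightarrow> f k = 0"
  shows "fsum f = sum f A"
  unfolding fsum_def using assms by (intro sum.mono_neutral_left) auto

lemma fsum_zero [simp]: "fsum (\<lambda>k. 0) = 0"
  by (simp add: fsum_def)

lemma fsum_eq_single: "(\<And>k. k \<noteq> a \<Longrightarrow> f k = 0) \<Longrightarrow> fsum f = f a"
  using fsum_eq_sum[of "{a}" f] by auto

lemma fsum_sum_commute:
  assumes "finite A" "finite K" "\<And>a k. a \<in> A \<Longrightarrow> k \<notin> K \<Longrightarrow> f a k = 0"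
  shows "fsum (\<lambda>k. \<Sum>a\<in>A. f a k) = (\<Sum>a\<in>A. fsum (f a))"
proof -
  have "fsum (\<lambda>k. \<Sum>a\<in>A. f a k) = (\<Sum>k\<in>K. \<Sum>a\<in>A. f a k)"
    by (rule fsum_eq_sum) (use assms in auto)
  also have "\<dots> = (\<Sum>a\<in>A. \<Sum>k\<in>K. f a k)"
    by (rule sum.swap)
  also have "\<dots> = (\<Sum>a\<in>A. fsum (f a))"
    by (intro sum.cong refl fsum_eq_sum[symmetric]) (use assms in auto)
  finally show ?thesis .
qed

lemma fsum_sum_commute_nat:
  fixes f :: "'a \<Rightarrow> nat \<Rightarrow> 'b::comm_monoid_add"
  assumes "finite A" "\<And>a k. a \<in> A \<Longrightarrow> N \<le> int k \<Longrightarrow> f a k = 0"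
  shows "fsum (\<lambda>k. \<Sum>a\<in>A. f a k) = (\<Sum>a\<in>A. fsum (f a))"
  by (rule fsum_sum_commute[where K = "{..<nat N}"]) (use assms in auto)

lemma fsum_eq_sum_translate:
  fixes f :: "'i::ab_group_add \<Rightarrow> 'a::comm_monoid_add"
  assumes "finite B" "\<And>c. c - a \<notin> B \<Longrightarrow> f c = 0"
  shows "fsum f = (\<Sum>b\<in>B. f (a + b))"
proof -
  have "f c = 0" if "c \<notin> (+) a ` B" for c
  proof (rule assms(2))
    show "c - a \<notin> B"
      using that by (metis add.commute diff_add_cancel image_eqI)
  qed
  then have "fsum f = sum f ((+) a ` B)"
    using assms(1) by (intro fsum_eq_sum) auto
  then show ?thesis
    by (simp add: sum.reindex)
qed

lemma at_one_eq_sum: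
  "finite S \<Longrightarrow> torus_support YW u \<subseteq> S \<Longrightarrow> at_one YW u m0 w = (\<Sum>m\<in>S. YW u m0 m w)"
  unfolding at_one_def by (rule fsum_eq_sum) (auto intro: torus_support_eq_0)

locale toroidal_va_rep =
  fixes sV :: "complex \<Rightarrow> 'v::ab_group_add \<Rightarrow> 'v"
    and Y :: "'v \<Rightarrow> int \<Rightarrow> int^'r::finite \<Rightarrow> 'v \<Rightarrow> 'v"
    and one :: 'v
    and sW :: "complex \<Rightarrow> 'w::ab_group_add \<Rightarrow> 'w"
    and YW :: "'v \<Rightarrow> int \<Rightarrow> int^'r \<Rightarrow> 'w \<Rightarrow> 'w"
  assumes va: "toroidal_va sV Y one"
    and module: "toroidal_module sV Y one sW YW"
begin

sublocale V: vector_space sV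
  using va unfolding toroidal_va_def by blast

sublocale W: vector_space sW
  using module unfolding toroidal_module_def by blast

lemma Y_truncation: "\<exists>N. \<forall>m0\<ge>N. \<forall>m. Y u m0 m v = 0"
  using va unfolding toroidal_va_def by blast

lemma Y_creation: "0 \<le> m0 \<Longrightarrow> Y v m0 m one = 0"
  using va unfolding toroidal_va_def by blast

lemma YW_linear_left: "Vector_Spaces.linear sV sW (\<lambda>u. YW u m0 m w)"
  using module unfolding toroidal_module_def by blast

lemma YW_linear_right: "Vector_Spaces.linear sW sW (YW u m0 m)"
  using module unfolding toroidal_module_def by blast

lemma YW_truncation: "\<exists>N. \<forall>m0\<ge>N. \<forall>m. YW u m0 m w = 0"
  using module unfolding toroidal_module_def by blast

lemma YW_vacuum: "YW one m0 m w = (if m0 = -1 \<and> m = 0 then w else 0)"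
  using module unfolding toroidal_module_def by blast

lemma YW_jacobi:
  "tjac1 sW YW u v n p q a c w - tjac2 sW YW u v n p q a c w = tjac3 sW YW Y u v n p q a c w"
  using module unfolding toroidal_module_def toroidal_jacobi_def by blast

lemma YW_add_left: "YW (x + y) m0 m w = YW x m0 m w + YW y m0 m w"
  by (rule module_hom.add[OF module_hom_linearI[OF YW_linear_left]])

lemma YW_scale_left: "YW (sV c x) m0 m w = sW c (YW x m0 m w)"
  by (rule module_hom.scale[OF module_hom_linearI[OF YW_linear_left]])

lemma YW_zero_left: "YW 0 m0 m w = 0"
  by (rule module_hom.zero[OF module_hom_linearI[OF YW_linear_left]])

lemma YW_sum_left: "YW (sum g A) m0 m w = (\<Sum>a\<in>A. YW (g a) m0 m w)"
  by (rule module_hom.sum[OF module_hom_linearI[OF YW_linear_left]])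

lemma YW_zero_right: "YW u m0 m 0 = 0"
  by (rule module_hom.zero[OF module_hom_linearI[OF YW_linear_right]])

lemma YW_add_right: "YW u m0 m (x + y) = YW u m0 m x + YW u m0 m y"
  by (rule module_hom.add[OF module_hom_linearI[OF YW_linear_right]])

lemma YW_scale_right: "YW u m0 m (sW c x) = sW c (YW u m0 m x)"
  by (rule module_hom.scale[OF module_hom_linearI[OF YW_linear_right]])

lemma YW_sum_right: "YW u m0 m (sum g A) = (\<Sum>a\<in>A. YW u m0 m (g a))"
  by (rule module_hom.sum[OF module_hom_linearI[OF YW_linear_right]])

lemma adjoint_rep: "toroidal_va_rep sV Y one sV Y"
  using va by unfold_locales (auto simp: toroidal_va_def toroidal_module_def)

lemma YW_Y_vanishes_off_translate:
  assumes "c - a \<notin> torus_support YW v"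
  shows "YW (Y u N a v) P c w = 0"
proof -
  obtain N0 where N0: "\<forall>m0\<ge>N0. \<forall>m. Y u m0 m v = 0"
    using Y_truncation by blast
  have v_off: "YW v Q (c - a) x = 0" for Q x
    using assms by (rule torus_support_eq_0)
  show ?thesis
  proof (induction "nat (N0 - N)" arbitrary: N P rule: less_induct)
    case less
    show ?case
    proof (cases "N0 \<le> N")
      case True
      then show ?thesis
        using N0 by (simp add: YW_zero_left)
    next
      case False
      have higher_modes: "YW (Y u (N + int k) a v) (P - int k) c w = 0" if "k \<noteq> 0" for k :: nat
        by (rule less) (use False that in auto)
      text \<open>With q = 0 both terms on the left pass through a mode of v at c - a; on the right
        the k-th term has N + k in place of N.\<close>
      have "YW (Y u N a v) P c w = tjac3 sW YW Y u v N P 0 a c w"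
        unfolding tjac3_def by (subst fsum_eq_single[where a = 0]) (simp_all add: higher_modes)
      also have "\<dots> = tjac1 sW YW u v N P 0 a c w - tjac2 sW YW u v N P 0 a c w"
        by (rule YW_jacobi[symmetric])
      also have "\<dots> = 0"
        by (simp add: tjac1_def tjac2_def v_off YW_zero_right)
      finally show ?thesis .
    qed
  qed
qed

lemma torus_support_vacuum: "torus_support YW one \<subseteq> {0}"
  by (auto simp: torus_support_def YW_vacuum)

lemma YW_vacuum_descendant_off_diagonal: "n \<noteq> m \<Longrightarrow> YW (Y v m0 m one) n0 n w = 0"
  by (rule YW_Y_vanishes_off_translate) (use torus_support_vacuum in auto)

lemma torus_support_vacuum_descendant: "torus_support YW (Y v m0 m one) \<subseteq> {m}"
  unfolding torus_support_def using YW_vacuum_descendant_off_diagonal by blast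

text \<open>The Jacobi identity for \<open>(v, 1)\<close> with \<open>n = -1\<close>, \<open>p = n0 + 1\<close>, \<open>q = -1\<close>: the vacuum
  property leaves a single term on the left, the creation property a single term on the right.\<close>
lemma YW_eq_YW_creation: "YW v n0 n w = YW (Y v (-1) n one) n0 n w"
proof -
  have "YW v n0 n w = tjac1 sW YW v one (-1) (n0 + 1) (-1) n n w"
    unfolding tjac1_def
    by (subst fsum_eq_single[where a = 0]) (simp_all add: YW_vacuum YW_zero_right)
  also have "\<dots> = tjac3 sW YW Y v one (-1) (n0 + 1) (-1) n n w"
    using YW_jacobi[of v one "-1" "n0 + 1" "-1" n n w] by (simp add: tjac2_def YW_vacuum)
  also have "\<dots> = YW (Y v (-1) n one) n0 n w"
    unfolding tjac3_def
    by (subst fsum_eq_single[where a = 0]) (simp_all add: Y_creation YW_zero_left)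
  finally show ?thesis .
qed

lemma YW_eq_fsum_vacuum_descendants: "YW v n0 n w = fsum (\<lambda>m. YW (Y v (-1) m one) n0 n w)"
  by (subst fsum_eq_single[where a = n])
    (auto simp: YW_vacuum_descendant_off_diagonal intro: YW_eq_YW_creation)

lemma YW_eq_at_one_vacuum_descendant: "YW v m0 m w = at_one YW (Y v (-1) m one) m0 w"
  unfolding at_one_def
  by (subst fsum_eq_single[where a = m])
    (auto simp: YW_vacuum_descendant_off_diagonal intro: YW_eq_YW_creation)

lemma vacuum_descendant_in_V0: "Y v m0 m one \<in> V0 sV Y one"
  unfolding V0_def by (rule V.span_base) blast

lemma torus_support_add: "torus_support YW (x + y) \<subseteq> torus_support YW x \<union> torus_support YW y"
  unfolding torus_support_def by (auto simp: YW_add_left) blast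

lemma torus_support_scale: "torus_support YW (sV c x) \<subseteq> torus_support YW x"
  by (auto simp: torus_support_def YW_scale_left)

lemma finite_torus_support_V0: "u \<in> V0 sV Y one \<Longrightarrow> finite (torus_support YW u)"
  unfolding V0_def
proof (induction rule: V.span_induct_alt)
  case base
  then show ?case
    by (simp add: torus_support_def YW_zero_left)
next
  case (step c x y)
  from step.hyps obtain v m0 m where "x = Y v m0 m one"
    by blast
  then have "torus_support YW x \<subseteq> {m}"
    by (simp add: torus_support_vacuum_descendant)
  then have "finite (torus_support YW x \<union> torus_support YW y)"
    using step.IH by (simp add: finite_subset)
  moreover have "torus_support YW (sV c x + y) \<subseteq> torus_support YW x \<union> torus_support YW y"
    using torus_support_add torus_support_scale by blast
  ultimately show ?case
    by (simp add: finite_subset)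
qed

lemma at_one_lincomb:
  assumes "finite (torus_support YW u)" "finite (torus_support YW v)"
  shows "at_one YW (sV a u + sV b v) m0 w = sW a (at_one YW u m0 w) + sW b (at_one YW v m0 w)"
proof -
  let ?S = "torus_support YW u \<union> torus_support YW v"
  have "torus_support YW (sV a u + sV b v) \<subseteq> ?S"
    using torus_support_add torus_support_scale by blast
  then show ?thesis
    using assms
    by (simp add: at_one_eq_sum[of ?S] YW_add_left YW_scale_left sum.distrib W.scale_sum_right)
qed

lemma linear_at_one:
  assumes "finite (torus_support YW u)"
  shows "Vector_Spaces.linear sW sW (at_one YW u m0)"
proof -
  have "at_one YW u m0 = (\<lambda>w. \<Sum>m\<in>torus_support YW u. YW u m0 m w)"
    using assms by (simp add: at_one_eq_sum fun_eq_iff)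
  then show ?thesis
    by (simp add: Vector_Spaces.linear_iff W.vector_space_axioms YW_add_right YW_scale_right
        sum.distrib W.scale_sum_right)
qed

lemma at_one_truncation: "\<exists>N. \<forall>m0\<ge>N. at_one YW u m0 w = 0"
proof -
  obtain N where "\<forall>m0\<ge>N. \<forall>m. YW u m0 m w = 0"
    using YW_truncation by blast
  then show ?thesis
    unfolding at_one_def by (intro exI[of _ N]) simp
qed

lemma at_one_vacuum: "at_one YW one m0 w = (if m0 = -1 then w else 0)"
  unfolding at_one_def by (subst fsum_eq_single[where a = 0]) (auto simp: YW_vacuum)

lemma at_one_jacobi_term1:
  assumes A: "finite A" "torus_support YW u \<subseteq> A" and B: "finite B" "torus_support YW v \<subseteq> B"
  shows "fsum (\<lambda>k::nat. sW ((-1) ^ k * (of_int n gchoose k))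
              (at_one YW u (n + p - int k) (at_one YW v (q + int k) w)))
       = (\<Sum>(a, b)\<in>A \<times> B. tjac1 sW YW u v n p q a (a + b) w)"
proof -
  obtain N where N: "\<forall>m0\<ge>N. \<forall>m. YW v m0 m w = 0"
    using YW_truncation by blast
  have "fsum (\<lambda>k::nat. sW ((-1) ^ k * (of_int n gchoose k))
              (at_one YW u (n + p - int k) (at_one YW v (q + int k) w)))
      = fsum (\<lambda>k. \<Sum>(a, b)\<in>A \<times> B. sW ((-1) ^ k * (of_int n gchoose k))
              (YW u (n + p - int k) a (YW v (q + int k) b w)))"
    by (simp add: at_one_eq_sum[OF A] at_one_eq_sum[OF B] YW_sum_right W.scale_sum_right
        sum.cartesian_product prod.case_distrib)
  also have "\<dots> = (\<Sum>(a, b)\<in>A \<times> B. tjac1 sW YW u v n p q a (a + b) w)"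
    unfolding tjac1_def
    by (subst fsum_sum_commute_nat[where N = "N - q"])
      (use A B N in \<open>auto simp: YW_zero_right case_prod_unfold\<close>)
  finally show ?thesis .
qed

lemma at_one_jacobi_term2:
  assumes A: "finite A" "torus_support YW u \<subseteq> A" and B: "finite B" "torus_support YW v \<subseteq> B"
  shows "fsum (\<lambda>k::nat. sW ((-1) powi n * (-1) ^ k * (of_int n gchoose k))
              (at_one YW v (n + q - int k) (at_one YW u (p + int k) w)))
       = (\<Sum>(a, b)\<in>A \<times> B. tjac2 sW YW u v n p q a (a + b) w)"
proof -
  obtain N where N: "\<forall>m0\<ge>N. \<forall>m. YW u m0 m w = 0"
    using YW_truncation by blast
  have "fsum (\<lambda>k::nat. sW ((-1) powi n * (-1) ^ k * (of_int n gchoose k))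
              (at_one YW v (n + q - int k) (at_one YW u (p + int k) w)))
      = fsum (\<lambda>k. \<Sum>a\<in>A. \<Sum>b\<in>B. sW ((-1) powi n * (-1) ^ k * (of_int n gchoose k))
              (YW v (n + q - int k) b (YW u (p + int k) a w)))"
    by (simp add: at_one_eq_sum[OF A] at_one_eq_sum[OF B] YW_sum_right W.scale_sum_right
        sum.swap[where A = B and B = A])
  also have "\<dots> = fsum (\<lambda>k. \<Sum>(a, b)\<in>A \<times> B. sW ((-1) powi n * (-1) ^ k * (of_int n gchoose k))
              (YW v (n + q - int k) b (YW u (p + int k) a w)))"
    by (simp only: sum.cartesian_product)
  also have "\<dots> = (\<Sum>(a, b)\<in>A \<times> B. tjac2 sW YW u v n p q a (a + b) w)"
    unfolding tjac2_def
    by (subst fsum_sum_commute_nat[where N = "N - p"])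
      (use A B N in \<open>auto simp: YW_zero_right case_prod_unfold\<close>)
  finally show ?thesis .
qed

lemma at_one_at_one_Y:
  assumes A: "finite A" "torus_support Y u \<subseteq> A" and B: "finite B" "torus_support YW v \<subseteq> B"
  shows "at_one YW (at_one Y u N v) P w = (\<Sum>(a, b)\<in>A \<times> B. YW (Y u N a v) P (a + b) w)"
proof -
  have "at_one YW (at_one Y u N v) P w = fsum (\<lambda>c. \<Sum>a\<in>A. YW (Y u N a v) P c w)"
    unfolding at_one_eq_sum[OF A] by (simp add: at_one_def YW_sum_left)
  also have "\<dots> = (\<Sum>a\<in>A. fsum (\<lambda>c. YW (Y u N a v) P c w))"
  proof (rule fsum_sum_commute[where K = "(\<lambda>(a, b). a + b) ` (A \<times> B)"])
    fix a c
    assume "a \<in> A" "c \<notin> (\<lambda>(a, b). a + b) ` (A \<times> B)"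
    then have "c - a \<notin> torus_support YW v"
      using B(2) by (force simp: image_iff)
    then show "YW (Y u N a v) P c w = 0"
      by (rule YW_Y_vanishes_off_translate)
  qed (use A B in auto)
  also have "\<dots> = (\<Sum>a\<in>A. \<Sum>b\<in>B. YW (Y u N a v) P (a + b) w)"
    using B by (intro sum.cong refl fsum_eq_sum_translate) (auto intro: YW_Y_vanishes_off_translate)
  finally show ?thesis
    by (simp add: sum.cartesian_product)
qed

lemma at_one_jacobi_term3:
  assumes A: "finite A" "torus_support Y u \<subseteq> A" and B: "finite B" "torus_support YW v \<subseteq> B"
  shows "fsum (\<lambda>k::nat. sW ((-1) ^ k * (of_int (int k - p - 1) gchoose k))
              (at_one YW (at_one Y u (n + int k) v) (p + q - int k) w))
       = (\<Sum>(a, b)\<in>A \<times> B. tjac3 sW YW Y u v n p q a (a + b) w)"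
proof -
  obtain N where N: "\<forall>m0\<ge>N. \<forall>m. Y u m0 m v = 0"
    using Y_truncation by blast
  show ?thesis
    unfolding at_one_at_one_Y[OF A B] W.scale_sum_right tjac3_def
    by (subst fsum_sum_commute_nat[where N = "N - n"])
      (use A B N in \<open>auto simp: YW_zero_left case_prod_unfold\<close>)
qed

lemma at_one_jacobi:
  assumes u: "u \<in> V0 sV Y one" and v: "v \<in> V0 sV Y one"
  shows "fsum (\<lambda>k::nat. sW ((-1) ^ k * (of_int n gchoose k))
              (at_one YW u (n + p - int k) (at_one YW v (q + int k) w)))
       - fsum (\<lambda>k::nat. sW ((-1) powi n * (-1) ^ k * (of_int n gchoose k))
              (at_one YW v (n + q - int k) (at_one YW u (p + int k) w)))
       = fsum (\<lambda>k::nat. sW ((-1) ^ k * (of_int (int k - p - 1) gchoose k))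
              (at_one YW (at_one Y u (n + int k) v) (p + q - int k) w))"
proof -
  interpret adjoint: toroidal_va_rep sV Y one sV Y
    by (rule adjoint_rep)
  define A where "A = torus_support YW u \<union> torus_support Y u"
  define B where "B = torus_support YW v"
  have A: "finite A" "torus_support YW u \<subseteq> A" "torus_support Y u \<subseteq> A"
    using finite_torus_support_V0[OF u] adjoint.finite_torus_support_V0[OF u] by (auto simp: A_def)
  have B: "finite B" "torus_support YW v \<subseteq> B"
    using finite_torus_support_V0[OF v] by (auto simp: B_def)
  show ?thesis
    unfolding at_one_jacobi_term1[OF A(1,2) B] at_one_jacobi_term2[OF A(1,2) B]
      at_one_jacobi_term3[OF A(1,3) B]
    by (simp add: sum_subtractf[symmetric] YW_jacobi case_prod_unfold)
qed

lemma va_module_at_one: "va_module sV (V0 sV Y one) (at_one Y) one sW (at_one YW)"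
  unfolding va_module_def va_jacobi_def
proof (intro conjI ballI allI)
  show "vector_space sW"
    by (rule W.vector_space_axioms)
next
  fix m0 w u v a b
  assume "u \<in> V0 sV Y one" "v \<in> V0 sV Y one"
  then show "at_one YW (sV a u + sV b v) m0 w = sW a (at_one YW u m0 w) + sW b (at_one YW v m0 w)"
    by (intro at_one_lincomb finite_torus_support_V0)
next
  fix u m0
  assume "u \<in> V0 sV Y one"
  then show "Vector_Spaces.linear sW sW (at_one YW u m0)"
    by (intro linear_at_one finite_torus_support_V0)
qed (use at_one_truncation at_one_vacuum at_one_jacobi in auto)

lemma va_irreducible_at_one:
  assumes irreducible: "toroidal_irreducible sW YW"
  shows "va_irreducible (V0 sV Y one) sW (at_one YW)"
  unfolding va_irreducible_def
proof (intro conjI allI impI)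
  show "\<exists>w::'w. w \<noteq> 0"
    using irreducible unfolding toroidal_irreducible_def by blast
next
  fix U
  assume U: "module.subspace sW U \<and> (\<forall>u\<in>V0 sV Y one. \<forall>m0. at_one YW u m0 ` U \<subseteq> U)"
  then have "YW v m0 m ` U \<subseteq> U" for v m0 m
    using vacuum_descendant_in_V0 by (auto simp: YW_eq_at_one_vacuum_descendant)
  then show "U = {0} \<or> U = UNIV"
    using irreducible U unfolding toroidal_irreducible_def by blast
qed

end

theorem proposition2p6:
  fixes sV :: "complex \<Rightarrow> 'v::ab_group_add \<Rightarrow> 'v"
    and Y :: "'v \<Rightarrow> int \<Rightarrow> int^'r::finite \<Rightarrow> 'v \<Rightarrow> 'v"
    and one :: 'v
    and sW :: "complex \<Rightarrow> 'w::ab_group_add \<Rightarrow> 'w"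
    and YW :: "'v \<Rightarrow> int \<Rightarrow> int^'r \<Rightarrow> 'w \<Rightarrow> 'w"
  assumes V: "toroidal_va sV Y one"
    and W: "toroidal_module sV Y one sW YW"
  shows "(\<forall>v m0 m n0 n w. n \<noteq> m \<longrightarrow> YW (Y v m0 m one) n0 n w = 0)
       \<and> (\<forall>v n0 n w. YW v n0 n w = fsum (\<lambda>m. YW (Y v (-1) m one) n0 n w))
       \<and> (\<forall>u\<in>V0 sV Y one. finite {m. \<exists>m0 w. YW u m0 m w \<noteq> 0})
       \<and> va_module sV (V0 sV Y one) (at_one Y) one sW (at_one YW)
       \<and> (toroidal_irreducible sW YW \<longrightarrow> va_irreducible (V0 sV Y one) sW (at_one YW))"
proof -
  interpret toroidal_va_rep sV Y one sW YW
    using V W by (rule toroidal_va_rep.intro)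
  show ?thesis
  proof (intro conjI ballI allI impI)
    fix u
    assume "u \<in> V0 sV Y one"
    then show "finite {m. \<exists>m0 w. YW u m0 m w \<noteq> 0}"
      using finite_torus_support_V0 unfolding torus_support_def by blast
  qed (auto intro: YW_vacuum_descendant_off_diagonal YW_eq_fsum_vacuum_descendants
      va_module_at_one va_irreducible_at_one)
qed

end
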